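(* Let $k,l$ be positive integers and $r:=k+l-1$. Then a set $S_{k,l}$ (in the sense of the recursive definition below) can be chosen to be a subset of $P_r$; more precisely, choosing at each recursive step the translation parameters $\delta_{k',l'}:=\delta_{k'+l'-1}$ and $\delta_{k',l'}':=\delta_{k'+l'-1}'$ yields valid choices (i.e., the required conditions "to the right of" and "high above" hold), and the resulting set $S_{k,l}$ is contained in $P_r$.
   Context: Define finite sets $P_r\subset\mathbb{Z}^2$ for integers $r\ge 0$ recursively: $P_0:=\{(0,0)\}$; for $r\ge 1$, $L_r:=P_{r-1}$, $R_r:=\{(x+\delta_r,\,y+\delta_r'):(x,y)\in L_r\}$ and $P_r:=L_r\cup R_r$, where $\delta_r:=3\cdot 4^{r-1}$ and $\delta_r':=(3r+1)\cdot 4^{r-1}$. For finite point sets $X,Y$ in the plane, $X$ is high above $Y$ if every line determined by two points of $X$ lies strictly above every point of $Y$, and every line determined by two points of $Y$ lies strictly below every point of $X$. The sets $S_{k,l}$ (for positive integers $k,l$) are defined recursively: $S_{k,l}:=\{(0,0)\}$ if $k\le 2$ or $l\le 2$; otherwise $S_{k,l}:=L_{k,l}\cup R_{k,l}$ where $L_{k,l}:=S_{k-1,l}$ and $R_{k,l}:=\{(x+\delta_{k,l},\,y+\delta_{k,l}'):(x,y)\in S_{k,l-1}\}$, with $\delta_{k,l}$ chosen so that every point of $R_{k,l}$ lies strictly to the right of every point of $L_{k,l}$, and $\delta_{k,l}'$ chosen so that $R_{k,l}$ is high above $L_{k,l}$. *)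

theory Defs
  imports Complex_Main
begin

type_synonym point = "int \<times> int"

definition shift :: "int \<Rightarrow> int \<Rightarrow> point \<Rightarrow> point" where
  "shift a b p = (fst p + a, snd p + b)"

definition delta :: "nat \<Rightarrow> int" where
  "delta r = 3 * 4 ^ (r - 1)"

definition delta' :: "nat \<Rightarrow> int" where
  "delta' r = (3 * int r + 1) * 4 ^ (r - 1)"

fun P :: "nat \<Rightarrow> point set" where
  "P 0 = {(0, 0)}"
| "P (Suc r) = P r \<union> shift (delta (Suc r)) (delta' (Suc r)) ` P r"

definition strictly_below_line :: "point \<Rightarrow> point \<Rightarrow> point \<Rightarrow> bool" where
  "strictly_below_line p q z \<longleftrightarrow> fst p \<noteq> fst q \<and>
     real_of_int (snd z) < real_of_int (snd p) +
        real_of_int (snd q - snd p) / real_of_int (fst q - fst p) * real_of_int (fst z - fst p)"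

definition strictly_above_line :: "point \<Rightarrow> point \<Rightarrow> point \<Rightarrow> bool" where
  "strictly_above_line p q z \<longleftrightarrow> fst p \<noteq> fst q \<and>
     real_of_int (snd z) > real_of_int (snd p) +
        real_of_int (snd q - snd p) / real_of_int (fst q - fst p) * real_of_int (fst z - fst p)"

definition high_above :: "point set \<Rightarrow> point set \<Rightarrow> bool" where
  "high_above X Y \<longleftrightarrow>
     (\<forall>p\<in>X. \<forall>q\<in>X. p \<noteq> q \<longrightarrow> (\<forall>y\<in>Y. strictly_below_line p q y)) \<and>
     (\<forall>p\<in>Y. \<forall>q\<in>Y. p \<noteq> q \<longrightarrow> (\<forall>x\<in>X. strictly_above_line p q x))"

definition strictly_right_of :: "point set \<Rightarrow> point set \<Rightarrow> bool" where
  "strictly_right_of R L \<longleftrightarrow> (\<forall>a\<in>L. \<forall>b\<in>R. fst a < fst b)"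

fun S :: "nat \<Rightarrow> nat \<Rightarrow> point set" where
  "S k l = (if k \<le> 2 \<or> l \<le> 2 then {(0, 0)}
            else S (k - 1) l \<union> shift (delta (k + l - 1)) (delta' (k + l - 1)) ` S k (l - 1))"

declare S.simps [simp del]

definition L_part :: "nat \<Rightarrow> nat \<Rightarrow> point set" where
  "L_part k l = S (k - 1) l"

definition R_part :: "nat \<Rightarrow> nat \<Rightarrow> point set" where
  "R_part k l = shift (delta (k + l - 1)) (delta' (k + l - 1)) ` S k (l - 1)"

end

theory Submission imports Defs begin

text \<open>Every point of \<open>P m\<close> lies on or below the line \<open>y = (m + k) x\<close>, by at most
  \<open>k (4^m - 1)\<close>, for every \<open>k > 0\<close>. The translation \<open>(delta (m+1), delta' (m+1))\<close> has
  slope \<open>m + 4/3\<close>; with \<open>k = 1\<close> this surplus outweighs the bounded deviation, so every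
  segment from a point of \<open>P m\<close> to a translated point of \<open>P m\<close> has slope above \<open>m + 1\<close>,
  while (with \<open>k = 2\<close>, by induction) every segment inside \<open>P m\<close> has slope below \<open>m + 1\<close>.
  Two point sets separated by a slope in this way lie high above one another, and
  \<open>S k l\<close> is the union of a subset of \<open>P (k + l - 2)\<close> and a translate of another one.\<close>

definition slope :: "point \<Rightarrow> point \<Rightarrow> real" where
  "slope p q = real_of_int (snd q - snd p) / real_of_int (fst q - fst p)"

lemma slope_commute: "slope p q = slope q p"
proof -
  have "real_of_int (snd q - snd p) / real_of_int (fst q - fst p)
      = (- real_of_int (snd p - snd q)) / (- real_of_int (fst p - fst q))"
    by simp
  then show ?thesis
    unfolding slope_def by (simp only: minus_divide_divide)
qed

lemma less_slope_iff:
  "fst p < fst q \<Longrightarrow> c < slope p q \<longleftrightarrow> c * real_of_int (fst q - fst p) < real_of_int (snd q - snd p)"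
  unfolding slope_def by (simp add: pos_less_divide_eq)

lemma slope_less_iff:
  "fst p < fst q \<Longrightarrow> slope p q < c \<longleftrightarrow> real_of_int (snd q - snd p) < c * real_of_int (fst q - fst p)"
  unfolding slope_def by (simp add: pos_divide_less_eq)

lemma of_int_less_slope_iff:
  "fst p < fst q \<Longrightarrow> of_int c < slope p q \<longleftrightarrow> c * (fst q - fst p) < snd q - snd p"
  unfolding less_slope_iff of_int_mult[symmetric] of_int_less_iff ..

lemma slope_less_of_int_iff:
  "fst p < fst q \<Longrightarrow> slope p q < of_int c \<longleftrightarrow> snd q - snd p < c * (fst q - fst p)"
  unfolding slope_less_iff of_int_mult[symmetric] of_int_less_iff ..

lemma strictly_below_line_iff_slope:
  "strictly_below_line p q z \<longleftrightarrow> fst p \<noteq> fst q \<and>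
     real_of_int (snd z) < real_of_int (snd p) + slope p q * real_of_int (fst z - fst p)"
  unfolding strictly_below_line_def slope_def by (simp only: of_int_diff)

lemma strictly_above_line_iff_slope:
  "strictly_above_line p q z \<longleftrightarrow> fst p \<noteq> fst q \<and>
     real_of_int (snd p) + slope p q * real_of_int (fst z - fst p) < real_of_int (snd z)"
  unfolding strictly_above_line_def slope_def by (simp only: of_int_diff)

lemma high_above_if_slope_separated:
  fixes c :: real
  assumes X: "\<And>p q. p \<in> X \<Longrightarrow> q \<in> X \<Longrightarrow> p \<noteq> q \<Longrightarrow> fst p \<noteq> fst q \<and> slope p q < c"
    and Y: "\<And>p q. p \<in> Y \<Longrightarrow> q \<in> Y \<Longrightarrow> p \<noteq> q \<Longrightarrow> fst p \<noteq> fst q \<and> slope p q < c"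
    and XY: "\<And>x y. x \<in> X \<Longrightarrow> y \<in> Y \<Longrightarrow> fst y < fst x \<and> c < slope y x"
  shows "high_above X Y"
  unfolding high_above_def
proof (intro conjI ballI impI)
  fix p q y assume "p \<in> X" "q \<in> X" "p \<noteq> q" "y \<in> Y"
  with X XY obtain "fst p \<noteq> fst q" "slope p q < c" and right: "fst y < fst p" and "c < slope y p"
    by blast
  then have "slope p q * real_of_int (fst p - fst y) < c * real_of_int (fst p - fst y)"
    by (intro mult_strict_right_mono) simp_all
  moreover have "c * real_of_int (fst p - fst y) < real_of_int (snd p - snd y)"
    using less_slope_iff[OF right] \<open>c < slope y p\<close> by blast
  ultimately show "strictly_below_line p q y"
    using \<open>fst p \<noteq> fst q\<close> unfolding strictly_below_line_iff_slope
    by (simp add: right_diff_distrib)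
next
  fix p q x assume "p \<in> Y" "q \<in> Y" "p \<noteq> q" "x \<in> X"
  with Y XY obtain "fst p \<noteq> fst q" "slope p q < c" and right: "fst p < fst x" and "c < slope p x"
    by blast
  then have "slope p q * real_of_int (fst x - fst p) < c * real_of_int (fst x - fst p)"
    by (intro mult_strict_right_mono) simp_all
  moreover have "c * real_of_int (fst x - fst p) < real_of_int (snd x - snd p)"
    using less_slope_iff[OF right] \<open>c < slope p x\<close> by blast
  ultimately show "strictly_above_line p q x"
    using \<open>fst p \<noteq> fst q\<close> unfolding strictly_above_line_iff_slope by simp
qed

lemma zero_in_P: "(0, 0) \<in> P m"
  by (induction m) auto

lemma P_SucE:
  assumes "p \<in> P (Suc m)"
  obtains "p \<in> P m"
    | u where "u \<in> P m" "p = (fst u + 3 * 4 ^ m, snd u + (3 * int m + 4) * 4 ^ m)"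
  using assms by (auto simp: shift_def delta_def delta'_def algebra_simps)

lemma P_fst_bounds: "p \<in> P m \<Longrightarrow> 0 \<le> fst p \<and> fst p < 4 ^ m"
proof (induction m arbitrary: p)
  case 0
  then show ?case by simp
next
  case (Suc m)
  have "(0::int) < 4 ^ m" by simp
  from \<open>p \<in> P (Suc m)\<close> show ?case
  proof (cases rule: P_SucE)
    case 1
    with Suc.IH[of p] \<open>0 < 4 ^ m\<close> show ?thesis by simp
  next
    case (2 u)
    with Suc.IH[of u] \<open>0 < 4 ^ m\<close> show ?thesis by simp
  qed
qed

lemma P_fst_less_shifted: "p \<in> P m \<Longrightarrow> u \<in> P m \<Longrightarrow> fst p < fst u + 3 * 4 ^ m"
  using P_fst_bounds[of p m] P_fst_bounds[of u m] by simp

lemma P_below_line: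
  assumes "p \<in> P m" and "k > 0"
  shows "- k * (4 ^ m - 1) \<le> snd p - (int m + k) * fst p \<and> snd p - (int m + k) * fst p \<le> 0"
  using assms
proof (induction m arbitrary: p k)
  case 0
  then show ?case by simp
next
  case (Suc m)
  define q :: int where "q = 4 ^ m"
  have "q \<ge> 1" "k * q \<ge> q"
    using \<open>k > 0\<close> by (simp_all add: q_def)
  have target: "- k * (4 ^ Suc m - 1) = - 4 * (k * q) + k"
    by (simp add: q_def algebra_simps)
  have IH: "- (k * q) - q + k + 1 \<le> snd w - (int (Suc m) + k) * fst w \<and> snd w - (int (Suc m) + k) * fst w \<le> 0"
    if "w \<in> P m" for w
  proof -
    have "int m + (k + 1) = int (Suc m) + k" "- (k + 1) * (4 ^ m - 1) = - (k * q) - q + k + 1"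
      by (simp_all add: q_def algebra_simps)
    with Suc.IH[OF that, of "k + 1"] \<open>k > 0\<close> show ?thesis
      by (simp only:)
  qed
  from \<open>p \<in> P (Suc m)\<close> show ?case
  proof (cases rule: P_SucE)
    case 1
    with IH[OF 1] target \<open>q \<ge> 1\<close> \<open>k * q \<ge> q\<close> show ?thesis
      by (intro conjI) linarith+
  next
    case (2 u)
    \<comment> \<open>the translation vector has slope \<open>m + 4/3\<close>, below the line slope \<open>m + 1 + k\<close>\<close>
    have "snd p - (int (Suc m) + k) * fst p = snd u - (int (Suc m) + k) * fst u + q - 3 * (k * q)"
      using 2(2) by (simp add: q_def algebra_simps)
    with IH[OF 2(1)] target \<open>q \<ge> 1\<close> \<open>k * q \<ge> q\<close> show ?thesis
      by (intro conjI) linarith+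
  qed
qed

lemma P_fst_inj: "p \<in> P m \<Longrightarrow> q \<in> P m \<Longrightarrow> fst p = fst q \<Longrightarrow> p = q"
proof (induction m arbitrary: p q)
  case 0
  then show ?case by simp
next
  case (Suc m)
  from \<open>p \<in> P (Suc m)\<close> show ?case
  proof (cases rule: P_SucE)
    case p: 1
    from \<open>q \<in> P (Suc m)\<close> show ?thesis
    proof (cases rule: P_SucE)
      case 1
      with p Suc show ?thesis by blast
    next
      case (2 v)
      with p P_fst_less_shifted[of p m v] \<open>fst p = fst q\<close> show ?thesis by simp
    qed
  next
    case p: (2 u)
    from \<open>q \<in> P (Suc m)\<close> show ?thesis
    proof (cases rule: P_SucE)
      case 1
      with p P_fst_less_shifted[of q m u] \<open>fst p = fst q\<close> show ?thesis by simp
    next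
      case (2 v)
      with p Suc.IH[of u v] \<open>fst p = fst q\<close> show ?thesis by simp
    qed
  qed
qed

lemma P_slope_less_int:
  "p \<in> P m \<Longrightarrow> q \<in> P m \<Longrightarrow> fst p < fst q \<Longrightarrow> snd q - snd p < (int m + 1) * (fst q - fst p)"
proof (induction m arbitrary: p q)
  case 0
  then show ?case by simp
next
  case (Suc m)
  have line: "- 2 * (4 ^ m - 1) \<le> snd w - (int m + 2) * fst w \<and> snd w - (int m + 2) * fst w \<le> 0"
    if "w \<in> P m" for w
    using P_below_line[OF that, of 2] by simp
  from \<open>p \<in> P (Suc m)\<close> show ?case
  proof (cases rule: P_SucE)
    case p: 1
    from \<open>q \<in> P (Suc m)\<close> show ?thesis
    proof (cases rule: P_SucE)
      case 1
      with p Suc have "snd q - snd p < (int m + 1) * (fst q - fst p)" by blast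
      moreover have "(int m + 1) * (fst q - fst p) < (int (Suc m) + 1) * (fst q - fst p)"
        using Suc.prems(3) by (intro mult_strict_right_mono) auto
      ultimately show ?thesis by linarith
    next
      case (2 v)
      \<comment> \<open>the right copy sits \<open>2\<cdot>4\<^sup>m\<close> below the line of slope \<open>m + 2\<close> through its left counterpart\<close>
      have "snd q - snd p - (int m + 2) * (fst q - fst p)
          = (snd v - (int m + 2) * fst v) - (snd p - (int m + 2) * fst p) - 2 * 4 ^ m"
        using 2(2) by (simp add: algebra_simps)
      with line[OF 2(1)] line[OF p] show ?thesis
        by (simp add: algebra_simps)
    qed
  next
    case p: (2 u)
    from \<open>q \<in> P (Suc m)\<close> show ?thesis
    proof (cases rule: P_SucE)
      case 1
      with p Suc.prems(3) P_fst_less_shifted[OF 1 p(1)] show ?thesis by simp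
    next
      case (2 v)
      with p Suc have "snd v - snd u < (int m + 1) * (fst v - fst u)" "fst u < fst v"
        by auto
      moreover have "(int m + 1) * (fst v - fst u) < (int (Suc m) + 1) * (fst v - fst u)"
        using \<open>fst u < fst v\<close> by (intro mult_strict_right_mono) auto
      moreover have "snd q - snd p = snd v - snd u" "fst q - fst p = fst v - fst u"
        using p 2 by simp_all
      ultimately show ?thesis by (simp only:)
    qed
  qed
qed

lemma P_slope_less:
  assumes "p \<in> P m" "q \<in> P m" "p \<noteq> q"
  shows "fst p \<noteq> fst q \<and> slope p q < of_int (int m + 1)"
proof -
  have "slope a b < of_int (int m + 1)" if "a \<in> P m" "b \<in> P m" "fst a < fst b" for a b
    using P_slope_less_int[OF that] slope_less_of_int_iff[OF that(3)] by blast
  moreover have "fst p \<noteq> fst q"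
    using P_fst_inj assms by blast
  ultimately show ?thesis
    using assms by (metis linorder_neqE slope_commute)
qed

abbreviation P_translate :: "nat \<Rightarrow> point \<Rightarrow> point" where
  "P_translate m \<equiv> shift (delta (Suc m)) (delta' (Suc m))"

lemma P_shift_slope_greater:
  assumes "a \<in> P m" "u \<in> P m"
  shows "fst a < fst (P_translate m u) \<and> of_int (int m + 1) < slope a (P_translate m u)"
proof
  show less: "fst a < fst (P_translate m u)"
    using P_fst_less_shifted[OF assms] by (simp add: shift_def delta_def)
  have line: "- (4 ^ m - 1) \<le> snd w - (int m + 1) * fst w \<and> snd w - (int m + 1) * fst w \<le> 0"
    if "w \<in> P m" for w
    using P_below_line[OF that, of 1] by simp
  have "snd (P_translate m u) - snd a - (int m + 1) * (fst (P_translate m u) - fst a)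
      = (snd u - (int m + 1) * fst u) - (snd a - (int m + 1) * fst a) + 4 ^ m"
    by (simp add: shift_def delta_def delta'_def algebra_simps)
  with line[OF assms(1)] line[OF assms(2)]
  have "(int m + 1) * (fst (P_translate m u) - fst a) < snd (P_translate m u) - snd a"
    by linarith
  then show "of_int (int m + 1) < slope a (P_translate m u)"
    unfolding of_int_less_slope_iff[OF less] .
qed

lemma P_translate_high_above:
  assumes L: "L \<subseteq> P m" and R: "R \<subseteq> P m"
  shows "strictly_right_of (P_translate m ` R) L \<and> high_above (P_translate m ` R) L"
proof
  show "strictly_right_of (P_translate m ` R) L"
    unfolding strictly_right_of_def
  proof (intro ballI)
    fix a b assume "a \<in> L" "b \<in> P_translate m ` R"
    then obtain u where "u \<in> R" "b = P_translate m u" by blast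
    with P_shift_slope_greater[of a m u] \<open>a \<in> L\<close> L R show "fst a < fst b" by blast
  qed
  show "high_above (P_translate m ` R) L"
  proof (rule high_above_if_slope_separated[where c = "of_int (int m + 1)"])
    fix p q assume "p \<in> P_translate m ` R" "q \<in> P_translate m ` R" "p \<noteq> q"
    then obtain u v where "u \<in> P m" "v \<in> P m" "u \<noteq> v" "p = P_translate m u" "q = P_translate m v"
      using R by blast
    with P_slope_less[of u m v] show "fst p \<noteq> fst q \<and> slope p q < of_int (int m + 1)"
      by (simp add: shift_def slope_def)
  next
    fix p q assume "p \<in> L" "q \<in> L" "p \<noteq> q"
    with L P_slope_less[of p m q] show "fst p \<noteq> fst q \<and> slope p q < of_int (int m + 1)"
      by blast
  next
    fix x y assume "x \<in> P_translate m ` R" "y \<in> L"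
    then obtain u where "u \<in> P m" "x = P_translate m u"
      using R by blast
    with P_shift_slope_greater[of y m u] \<open>y \<in> L\<close> L
    show "fst y < fst x \<and> of_int (int m + 1) < slope y x"
      by blast
  qed
qed

lemma S_subset_P: "S k l \<subseteq> P (k + l - 1)"
proof (induction k l rule: S.induct)
  case (1 k l)
  show ?case
  proof (cases "k \<le> 2 \<or> l \<le> 2")
    case True
    then show ?thesis using zero_in_P by (simp add: S.simps)
  next
    case False
    then have "S k l = S (k - 1) l \<union> shift (delta (k + l - 1)) (delta' (k + l - 1)) ` S k (l - 1)"
      by (simp add: S.simps[of k l])
    moreover have "k + l - 1 = Suc (k + l - 2)" "k - 1 + l - 1 = k + l - 2" "k + (l - 1) - 1 = k + l - 2"
      using False by auto
    ultimately show ?thesis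
      using 1 False by auto
  qed
qed

theorem proposition2:
  fixes k l :: nat
  assumes "k \<ge> 1" and "l \<ge> 1"
  shows "(k > 2 \<and> l > 2 \<longrightarrow>
            strictly_right_of (R_part k l) (L_part k l) \<and> high_above (R_part k l) (L_part k l))
         \<and> S k l \<subseteq> P (k + l - 1)"
proof (intro conjI[OF impI])
  show "S k l \<subseteq> P (k + l - 1)" by (rule S_subset_P)
next
  assume "k > 2 \<and> l > 2"
  then have r: "k + l - 1 = Suc (k + l - 2)" "k - 1 + l - 1 = k + l - 2" "k + (l - 1) - 1 = k + l - 2"
    by auto
  have "L_part k l \<subseteq> P (k + l - 2)" "S k (l - 1) \<subseteq> P (k + l - 2)"
    using S_subset_P[of "k - 1" l] S_subset_P[of k "l - 1"] unfolding L_part_def r by simp_all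
  from P_translate_high_above[OF this]
  show "strictly_right_of (R_part k l) (L_part k l) \<and> high_above (R_part k l) (L_part k l)"
    unfolding R_part_def r(1) by simp
qed

end
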